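(* Let $x,y:\mathbb{Z}\to\mathbb{R}$ be the coordinates of the vertices of a polygon indexed by $u\in\mathbb{Z}$, let $X+ih_1$, $Y+ih_2$ be their discrete analytic extensions, $h=(h_1,h_2)$, $P=(X,Y)$, and let $F:\mathbb{Z}^2\to\mathbb{R}$ satisfy $F(u+1,v)-F(u,v)=-[h(u+\tfrac12,v-\tfrac12),h(u+\tfrac12,v+\tfrac12)]$ and $F(u,v+1)-F(u,v)=[h(u-\tfrac12,v+\tfrac12),h(u+\tfrac12,v+\tfrac12)]$. For $(u,v)\in\mathbb{Z}^2$ let $v_1=P(u+1,v)-P(u,v)$, $v_2=P(u,v+1)-P(u,v)$, $v_3=P(u-1,v)-P(u,v)$, $v_4=P(u,v-1)-P(u,v)$, and let $A(u,v)=[v_3,v_2]+[v_1,v_4]$ (the area of the quadrangle with vertices $P(u+1,v),P(u,v+1),P(u-1,v),P(u,v-1)$). Then $$F(u+1,v)+F(u,v+1)+F(u-1,v)+F(u,v-1)-4F(u,v)=A(u,v).$$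
   Context: $[X,Y]$ is the $2\times2$ determinant with columns $X,Y$. With $(\mathbb{Z}^2)^*=(\mathbb{Z}+\tfrac12)^2$, functions $g:\mathbb{Z}^2\to\mathbb{R}$, $k:(\mathbb{Z}^2)^*\to\mathbb{R}$ form a discrete analytic function $g+ik$ if $g(u+1,v)-g(u,v)=k(u+\tfrac12,v+\tfrac12)-k(u+\tfrac12,v-\tfrac12)$ and $g(u,v+1)-g(u,v)=-(k(u+\tfrac12,v+\tfrac12)-k(u-\tfrac12,v+\tfrac12))$ for all $(u,v)$. The discrete analytic extension of $x$ is the unique $X+ih_1$ with $X(u,0)=x(u)$ and $h_1(u+\tfrac12,\tfrac12)=-h_1(u+\tfrac12,-\tfrac12)$; likewise $Y+ih_2$ for $y$. *)

theory Defs
  imports Complex_Main "HOL-Library.Product_Plus"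
begin

text \<open>Encoding: the dual lattice (Z+1/2)^2 is indexed by int x int, where the
pair (a, b) stands for the dual vertex (a + 1/2, b + 1/2).\<close>

definition det2 :: "real \<times> real \<Rightarrow> real \<times> real \<Rightarrow> real" where
  "det2 X Y = fst X * snd Y - snd X * fst Y"

definition discrete_analytic ::
  "(int \<Rightarrow> int \<Rightarrow> real) \<Rightarrow> (int \<Rightarrow> int \<Rightarrow> real) \<Rightarrow> bool" where
  "discrete_analytic g k \<longleftrightarrow>
     (\<forall>u v. g (u+1) v - g u v = k u v - k u (v-1)) \<and>
     (\<forall>u v. g u (v+1) - g u v = - (k u v - k (u-1) v))"

text \<open>(G, k) is the discrete analytic extension of x : Z \<Rightarrow> R.
  The condition k u 0 = - k u (-1) encodes h(u+1/2, 1/2) = - h(u+1/2, -1/2).\<close>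
definition discrete_analytic_extension ::
  "(int \<Rightarrow> real) \<Rightarrow> (int \<Rightarrow> int \<Rightarrow> real) \<Rightarrow> (int \<Rightarrow> int \<Rightarrow> real) \<Rightarrow> bool" where
  "discrete_analytic_extension x G k \<longleftrightarrow>
     discrete_analytic G k \<and> (\<forall>u. G u 0 = x u) \<and> (\<forall>u. k u 0 = - k u (-1))"

end

theory Submission
  imports Defs
begin

text \<open>Let a, b, c, d be the values of h at the four dual vertices around (u, v), in
  counterclockwise order starting at (u - 1/2, v - 1/2). Discrete analyticity makes the
  edge vectors v1, ..., v4 of the quadrangle equal to c - b, d - c, a - d, b - a, and the
  defining equations of F make its Laplacian equal to [a,d] + [d,c] + [c,b] + [b,a].
  Expanding [a - d, d - c] + [c - b, b - a] by bilinearity and antisymmetry gives the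
  same cyclic sum.\<close>

lemma det2_swap: "det2 Y X = - det2 X Y"
  by (simp add: det2_def)

lemma det2_quadrangle:
  "det2 (a - d) (d - c) + det2 (c - b) (b - a)
     = det2 a d + det2 d c + det2 c b + det2 b a"
  by (simp add: det2_def algebra_simps)

lemma discrete_analytic_around_vertex:
  assumes "discrete_analytic g k"
  shows "g (u+1) v - g u v = k u v - k u (v-1)"
    and "g u (v+1) - g u v = k (u-1) v - k u v"
    and "g (u-1) v - g u v = k (u-1) (v-1) - k (u-1) v"
    and "g u (v-1) - g u v = k u (v-1) - k (u-1) (v-1)"
proof -
  have u_step: "\<And>a b. g (a+1) b - g a b = k a b - k a (b-1)"
    and v_step: "\<And>a b. g a (b+1) - g a b = - (k a b - k (a-1) b)"
    using assms unfolding discrete_analytic_def by auto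
  show "g (u+1) v - g u v = k u v - k u (v-1)"
    by (fact u_step)
  show "g u (v+1) - g u v = k (u-1) v - k u v"
    using v_step[of u v] by simp
  show "g (u-1) v - g u v = k (u-1) (v-1) - k (u-1) v"
    using u_step[of "u-1" v] by simp
  show "g u (v-1) - g u v = k u (v-1) - k (u-1) (v-1)"
    using v_step[of u "v-1"] by simp
qed

lemma laplacian_area_potential:
  fixes F :: "int \<Rightarrow> int \<Rightarrow> real" and h :: "int \<Rightarrow> int \<Rightarrow> real \<times> real"
  assumes F_u: "\<And>a b. F (a+1) b - F a b = - det2 (h a (b-1)) (h a b)"
    and F_v: "\<And>a b. F a (b+1) - F a b = det2 (h (a-1) b) (h a b)"
  shows "F (u+1) v + F u (v+1) + F (u-1) v + F u (v-1) - 4 * F u v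
           = det2 (h (u-1) (v-1)) (h (u-1) v) + det2 (h (u-1) v) (h u v)
             + det2 (h u v) (h u (v-1)) + det2 (h u (v-1)) (h (u-1) (v-1))"
  using F_u[of u v] F_v[of u v] F_u[of "u-1" v] F_v[of u "v-1"]
  by (simp add: det2_swap[of "h u (v-1)" "h u v"]
                det2_swap[of "h u (v-1)" "h (u-1) (v-1)"])

theorem mainTheorem12:
  fixes x y :: "int \<Rightarrow> real"
    and X Y h1 h2 F :: "int \<Rightarrow> int \<Rightarrow> real"
    and u v :: int
  assumes extX: "discrete_analytic_extension x X h1"
    and extY: "discrete_analytic_extension y Y h2"
    and F_u: "\<And>a b. F (a+1) b - F a b
                = - det2 (h1 a (b-1), h2 a (b-1)) (h1 a b, h2 a b)"
    and F_v: "\<And>a b. F a (b+1) - F a b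
                = det2 (h1 (a-1) b, h2 (a-1) b) (h1 a b, h2 a b)"
  shows "(let P = (\<lambda>a b. (X a b, Y a b));
              v1 = P (u+1) v - P u v;
              v2 = P u (v+1) - P u v;
              v3 = P (u-1) v - P u v;
              v4 = P u (v-1) - P u v
          in F (u+1) v + F u (v+1) + F (u-1) v + F u (v-1) - 4 * F u v
             = det2 v3 v2 + det2 v1 v4)"
proof -
  define P where "P a b = (X a b, Y a b)" for a b
  define h where "h a b = (h1 a b, h2 a b)" for a b
  have "discrete_analytic X h1" "discrete_analytic Y h2"
    using extX extY by (simp_all add: discrete_analytic_extension_def)
  then have edges:
      "P (u+1) v - P u v = h u v - h u (v-1)"
      "P u (v+1) - P u v = h (u-1) v - h u v"
      "P (u-1) v - P u v = h (u-1) (v-1) - h (u-1) v"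
      "P u (v-1) - P u v = h u (v-1) - h (u-1) (v-1)"
    unfolding P_def h_def by (simp_all add: discrete_analytic_around_vertex)
  have "F (u+1) v + F u (v+1) + F (u-1) v + F u (v-1) - 4 * F u v
          = det2 (h (u-1) (v-1)) (h (u-1) v) + det2 (h (u-1) v) (h u v)
            + det2 (h u v) (h u (v-1)) + det2 (h u (v-1)) (h (u-1) (v-1))"
    by (rule laplacian_area_potential) (use F_u F_v in \<open>simp_all add: h_def\<close>)
  also have "\<dots> = det2 (P (u-1) v - P u v) (P u (v+1) - P u v)
                  + det2 (P (u+1) v - P u v) (P u (v-1) - P u v)"
    unfolding edges by (rule det2_quadrangle[symmetric])
  finally show ?thesis
    unfolding P_def Let_def .
qed

end
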